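(* Let $\mathcal{E}=(\mathbf{R},\mathbf{S},\Sigma_{st},\mathbf{F})$ be a consistent constructive relational to RDF data exchange setting, $I$ a consistent instance of $\mathbf{R}$, $E$ a forward nested regular expression, and $\mathcal{U}$ a universal simulation solution for $I$ w.r.t. $\mathcal{E}$. A pair $(n,m)$ is a certain answer to $E$ in $I$ w.r.t. $\mathcal{E}$ if and only if $(n,m)\in[\![E]\!]_{\mathcal{U}}$ and neither $n$ nor $m$ is a null value.
   Context: Values: $\mathsf{Iri}$ (IRIs, containing predicates $\mathsf{Pred}$), $\mathsf{NullIri}$, $\mathsf{Lit}$ with null literals $\mathsf{NullLit}\subseteq\mathsf{Lit}$; null values are those in $\mathsf{NullLit}\cup\mathsf{NullIri}$. $\mathbf{R}=(\mathcal{R},\Sigma_{fd})$: relation names with arities and functional dependencies; an instance assigns finite sets of tuples of non-null literals; consistent instances satisfy $\Sigma_{fd}$. Typed graph: finite set of triples $(s,p,o)$, $s\in\mathsf{Iri}\cup\mathsf{NullIri}$, $p\in\mathsf{Pred}$, $o\in\mathsf{Iri}\cup\mathsf{NullIri}\cup\mathsf{Lit}$, with type facts $T(n)$ ($T\in\mathcal{T}$), $\mathit{Literal}(n)$. Deterministic shape schema $\mathbf{S}=(\mathcal{T},\delta)$: partial $\delta:\mathcal{T}\times\mathsf{Pred}\to(\mathcal{T}\cup\{\mathit{Literal}\})\times\{1,?,*,+\}$; satisfaction: for each $\delta(T,p)=S^\mu$, $p$-successors of $T$-typed nodes have type $S$, at most one if $\mu\in\{1,?\}$, at least one if $\mu\in\{1,+\}$.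 Constructive setting: IRI constructors $f\in\mathcal{F}$ interpreted as $f^F:\mathsf{Lit}^n\to\mathsf{Iri}$ (constants) with pairwise disjoint ranges; full st-tgds $\forall\bar x.\,\varphi\Rightarrow\psi$, $\varphi$ over $\mathcal{R}$, $\psi$ a conjunction of atoms $\mathit{Triple}(t_1,p,t_2)$, $T(t)$, $\mathit{Literal}(t)$, terms variables or $f(\bar u)$. Solution for $I$: typed graph satisfying $\mathbf{S}$ and, together with $I$, $\Sigma_{st}$; $\mathcal{E}$ consistent if each consistent instance has one. Simulation: relation $R$ between nodes of $G$ and $H$ such that for $(n,m)\in R$: $n$ literal iff $m$ literal; if $n$ non-null then $n=m$; each edge $(n,p,n')\in G$ matched by some $(m,p,m')\in H$ with $(n',m')\in R$; $G$ simulated by $H$ if every node of $G$ is related to some node of $H$. A universal simulation solution for $I$: a solution simulated by every solution for $I$. Forward NREs: $E::=\epsilon\mid p\mid\Box\mid\langle\ell\rangle\mid[E]\mid E^*\mid E\cdot E\mid E+E$ with semantics: identity on nodes, $p$-edges, all edges, $\{(\ell,\ell)\}$ if $\ell$ is a node, $\{(n,n)\mid\exists m.(n,m)\in[\![E]\!]_G\}$, union, composition, reflexive-transitive closure. $(n,m)$ is a certain answer to $E$ in $I$ w.r.t. $\mathcal{E}$ iff $(n,m)\in[\![E]\!]_J$ for every solution $J$ for $I$. *)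

theory Defs
  imports Main
begin

text \<open>Nulls are indexed by naturals (infinite supply).\<close>

datatype ('i, 'l) node = Iri 'i | NullIri nat | Lit 'l | NullLit nat

fun is_literal :: "('i, 'l) node \<Rightarrow> bool" where
  "is_literal (Lit _) = True"
| "is_literal (NullLit _) = True"
| "is_literal _ = False"

fun is_null :: "('i, 'l) node \<Rightarrow> bool" where
  "is_null (NullIri _) = True"
| "is_null (NullLit _) = True"
| "is_null _ = False"

datatype 'T stype = STy 'T | SLiteral

datatype mult = MOne | MOpt | MStar | MPlus

record ('i, 'l, 'T) tgraph =
  triples :: "(('i, 'l) node \<times> 'i \<times> ('i, 'l) node) set"
  tfacts :: "(('i, 'l) node \<times> 'T) set"
  lfacts :: "('i, 'l) node set"

definition nodes :: "('i, 'l, 'T) tgraph \<Rightarrow> ('i, 'l) node set" where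
  "nodes G = {s. \<exists>p ob. (s, p, ob) \<in> triples G} \<union> {ob. \<exists>s p. (s, p, ob) \<in> triples G}
             \<union> fst ` tfacts G \<union> lfacts G"

definition wf_tgraph :: "'i set \<Rightarrow> ('i, 'l, 'T) tgraph \<Rightarrow> bool" where
  "wf_tgraph Pred G \<longleftrightarrow> finite (triples G) \<and> finite (tfacts G) \<and> finite (lfacts G)
     \<and> (\<forall>s p ob. (s, p, ob) \<in> triples G \<longrightarrow> \<not> is_literal s \<and> p \<in> Pred)
     \<and> (\<forall>n \<in> lfacts G. is_literal n)"

fun has_type :: "('i, 'l, 'T) tgraph \<Rightarrow> ('i, 'l) node \<Rightarrow> 'T stype \<Rightarrow> bool" where
  "has_type G n (STy T) = ((n, T) \<in> tfacts G)"
| "has_type G n SLiteral = (n \<in> lfacts G)"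

definition sat_schema ::
  "('T \<Rightarrow> 'i \<Rightarrow> ('T stype \<times> mult) option) \<Rightarrow> ('i, 'l, 'T) tgraph \<Rightarrow> bool" where
  "sat_schema \<delta> G \<longleftrightarrow> (\<forall>T p S \<mu>. \<delta> T p = Some (S, \<mu>) \<longrightarrow>
     (\<forall>n. (n, T) \<in> tfacts G \<longrightarrow>
        (\<forall>m. (n, p, m) \<in> triples G \<longrightarrow> has_type G m S)
      \<and> (\<mu> \<in> {MOne, MOpt} \<longrightarrow> (\<forall>m m'. (n, p, m) \<in> triples G \<longrightarrow> (n, p, m') \<in> triples G \<longrightarrow> m = m'))
      \<and> (\<mu> \<in> {MOne, MPlus} \<longrightarrow> (\<exists>m. (n, p, m) \<in> triples G))))"

datatype ('f, 'v) sterm = Var 'v | Fn 'f "'v list"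

datatype ('i, 'f, 'v, 'T) hatom =
    TripleA "('f, 'v) sterm" 'i "('f, 'v) sterm"
  | TypeA 'T "('f, 'v) sterm"
  | LitA "('f, 'v) sterm"

type_synonym ('r, 'v) batom = "'r \<times> 'v list"

type_synonym ('r, 'i, 'f, 'v, 'T) tgd = "('r, 'v) batom list \<times> ('i, 'f, 'v, 'T) hatom list"

text \<open>Setting: relational schema (arities, functional dependencies X -> Y on attribute positions),
  predicate set, shape schema delta (types = the whole type 'T), finite set of full st-tgds,
  IRI constructors with arities and their interpretation.\<close>
record ('r, 'i, 'l, 'T, 'f, 'v) setting =
  rel_arity :: "'r \<Rightarrow> nat"
  fds :: "('r \<times> nat set \<times> nat set) set"
  preds :: "'i set"
  delta :: "'T \<Rightarrow> 'i \<Rightarrow> ('T stype \<times> mult) option"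
  sttgds :: "('r, 'i, 'f, 'v, 'T) tgd set"
  cons_arity :: "'f \<Rightarrow> nat"
  cons_interp :: "'f \<Rightarrow> 'l list \<Rightarrow> 'i"

fun sterm_vars :: "('f, 'v) sterm \<Rightarrow> 'v set" where
  "sterm_vars (Var x) = {x}"
| "sterm_vars (Fn f us) = set us"

fun sterm_wf :: "('f \<Rightarrow> nat) \<Rightarrow> ('f, 'v) sterm \<Rightarrow> bool" where
  "sterm_wf ar (Var x) = True"
| "sterm_wf ar (Fn f us) = (length us = ar f)"

fun hatom_vars :: "('i, 'f, 'v, 'T) hatom \<Rightarrow> 'v set" where
  "hatom_vars (TripleA t1 p t2) = sterm_vars t1 \<union> sterm_vars t2"
| "hatom_vars (TypeA T t) = sterm_vars t"
| "hatom_vars (LitA t) = sterm_vars t"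

fun hatom_wf :: "'i set \<Rightarrow> ('f \<Rightarrow> nat) \<Rightarrow> ('i, 'f, 'v, 'T) hatom \<Rightarrow> bool" where
  "hatom_wf Pred ar (TripleA t1 p t2) = (p \<in> Pred \<and> sterm_wf ar t1 \<and> sterm_wf ar t2)"
| "hatom_wf Pred ar (TypeA T t) = sterm_wf ar t"
| "hatom_wf Pred ar (LitA t) = sterm_wf ar t"

definition tgd_wf :: "('r, 'i, 'l, 'T, 'f, 'v) setting \<Rightarrow> ('r, 'i, 'f, 'v, 'T) tgd \<Rightarrow> bool" where
  "tgd_wf \<E> \<sigma> \<longleftrightarrow>
     (\<forall>(R, xs) \<in> set (fst \<sigma>). length xs = rel_arity \<E> R)
   \<and> (\<forall>a \<in> set (snd \<sigma>). hatom_wf (preds \<E>) (cons_arity \<E>) a)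
   \<and> (\<Union>a \<in> set (snd \<sigma>). hatom_vars a) \<subseteq> (\<Union>(R, xs) \<in> set (fst \<sigma>). set xs)"

definition wf_setting :: "('r, 'i, 'l, 'T, 'f, 'v) setting \<Rightarrow> bool" where
  "wf_setting \<E> \<longleftrightarrow>
     (\<forall>(R, X, Y) \<in> fds \<E>. X \<union> Y \<subseteq> {..<rel_arity \<E> R})
   \<and> finite (sttgds \<E>) \<and> (\<forall>\<sigma> \<in> sttgds \<E>. tgd_wf \<E> \<sigma>)
   \<and> (\<forall>T p. delta \<E> T p \<noteq> None \<longrightarrow> p \<in> preds \<E>)
   \<and> (\<forall>f g xs ys. f \<noteq> g \<longrightarrow> length xs = cons_arity \<E> f \<longrightarrow> length ys = cons_arity \<E> g
        \<longrightarrow> cons_interp \<E> f xs \<noteq> cons_interp \<E> g ys)"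

type_synonym ('r, 'l) rinstance = "'r \<Rightarrow> 'l list set"

definition is_instance :: "('r, 'i, 'l, 'T, 'f, 'v) setting \<Rightarrow> ('r, 'l) rinstance \<Rightarrow> bool" where
  "is_instance \<E> I \<longleftrightarrow> finite {R. I R \<noteq> {}} \<and>
     (\<forall>R. finite (I R) \<and> (\<forall>t \<in> I R. length t = rel_arity \<E> R))"

definition consistent_instance :: "('r, 'i, 'l, 'T, 'f, 'v) setting \<Rightarrow> ('r, 'l) rinstance \<Rightarrow> bool" where
  "consistent_instance \<E> I \<longleftrightarrow> is_instance \<E> I \<and>
     (\<forall>(R, X, Y) \<in> fds \<E>. \<forall>t \<in> I R. \<forall>t' \<in> I R.
        (\<forall>i \<in> X. t ! i = t' ! i) \<longrightarrow> (\<forall>i \<in> Y. t ! i = t' ! i))"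

fun eval_sterm :: "('f \<Rightarrow> 'l list \<Rightarrow> 'i) \<Rightarrow> ('v \<Rightarrow> 'l) \<Rightarrow> ('f, 'v) sterm \<Rightarrow> ('i, 'l) node" where
  "eval_sterm F \<nu> (Var x) = Lit (\<nu> x)"
| "eval_sterm F \<nu> (Fn f us) = Iri (F f (map \<nu> us))"

fun hatom_holds ::
  "('f \<Rightarrow> 'l list \<Rightarrow> 'i) \<Rightarrow> ('v \<Rightarrow> 'l) \<Rightarrow> ('i, 'l, 'T) tgraph \<Rightarrow> ('i, 'f, 'v, 'T) hatom \<Rightarrow> bool" where
  "hatom_holds F \<nu> J (TripleA t1 p t2) = ((eval_sterm F \<nu> t1, p, eval_sterm F \<nu> t2) \<in> triples J)"
| "hatom_holds F \<nu> J (TypeA T t) = ((eval_sterm F \<nu> t, T) \<in> tfacts J)"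
| "hatom_holds F \<nu> J (LitA t) = (eval_sterm F \<nu> t \<in> lfacts J)"

definition sat_tgd ::
  "('f \<Rightarrow> 'l list \<Rightarrow> 'i) \<Rightarrow> ('r, 'l) rinstance \<Rightarrow> ('i, 'l, 'T) tgraph \<Rightarrow> ('r, 'i, 'f, 'v, 'T) tgd \<Rightarrow> bool" where
  "sat_tgd F I J \<sigma> \<longleftrightarrow> (\<forall>\<nu>. (\<forall>(R, xs) \<in> set (fst \<sigma>). map \<nu> xs \<in> I R) \<longrightarrow>
                              (\<forall>a \<in> set (snd \<sigma>). hatom_holds F \<nu> J a))"

definition is_solution ::
  "('r, 'i, 'l, 'T, 'f, 'v) setting \<Rightarrow> ('r, 'l) rinstance \<Rightarrow> ('i, 'l, 'T) tgraph \<Rightarrow> bool" where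
  "is_solution \<E> I J \<longleftrightarrow> wf_tgraph (preds \<E>) J \<and> sat_schema (delta \<E>) J
     \<and> (\<forall>\<sigma> \<in> sttgds \<E>. sat_tgd (cons_interp \<E>) I J \<sigma>)"

definition consistent_setting :: "('r, 'i, 'l, 'T, 'f, 'v) setting \<Rightarrow> bool" where
  "consistent_setting \<E> \<longleftrightarrow> (\<forall>I. consistent_instance \<E> I \<longrightarrow> (\<exists>J. is_solution \<E> I J))"

definition is_simulation ::
  "(('i, 'l) node \<times> ('i, 'l) node) set \<Rightarrow> ('i, 'l, 'T) tgraph \<Rightarrow> ('i, 'l, 'T) tgraph \<Rightarrow> bool" where
  "is_simulation Rel G H \<longleftrightarrow> Rel \<subseteq> nodes G \<times> nodes H \<and>
     (\<forall>(n, m) \<in> Rel. (is_literal n \<longleftrightarrow> is_literal m) \<and> (\<not> is_null n \<longrightarrow> n = m)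
        \<and> (\<forall>p n'. (n, p, n') \<in> triples G \<longrightarrow> (\<exists>m'. (m, p, m') \<in> triples H \<and> (n', m') \<in> Rel)))"

definition simulated_by :: "('i, 'l, 'T) tgraph \<Rightarrow> ('i, 'l, 'T) tgraph \<Rightarrow> bool" where
  "simulated_by G H \<longleftrightarrow> (\<exists>Rel. is_simulation Rel G H \<and> (\<forall>n \<in> nodes G. \<exists>m. (n, m) \<in> Rel))"

definition universal_sim_solution ::
  "('r, 'i, 'l, 'T, 'f, 'v) setting \<Rightarrow> ('r, 'l) rinstance \<Rightarrow> ('i, 'l, 'T) tgraph \<Rightarrow> bool" where
  "universal_sim_solution \<E> I U \<longleftrightarrow> is_solution \<E> I U \<and> (\<forall>J. is_solution \<E> I J \<longrightarrow> simulated_by U J)"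

text \<open>Node tests range over constants (IRIs and non-null literals); queries do not mention nulls.\<close>
datatype ('i, 'l) const = CIri 'i | CLit 'l

fun const_node :: "('i, 'l) const \<Rightarrow> ('i, 'l) node" where
  "const_node (CIri i) = Iri i"
| "const_node (CLit l) = Lit l"

datatype ('i, 'l) nre =
    NEps
  | NPred 'i
  | NAny
  | NTest "('i, 'l) const"
  | NNest "('i, 'l) nre"
  | NStar "('i, 'l) nre"
  | NSeq "('i, 'l) nre" "('i, 'l) nre"
  | NAlt "('i, 'l) nre" "('i, 'l) nre"

fun nre_sem :: "('i, 'l) nre \<Rightarrow> ('i, 'l, 'T) tgraph \<Rightarrow> (('i, 'l) node \<times> ('i, 'l) node) set" where
  "nre_sem NEps G = Id_on (nodes G)"
| "nre_sem (NPred p) G = {(s, ob). (s, p, ob) \<in> triples G}"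
| "nre_sem NAny G = {(s, ob). \<exists>p. (s, p, ob) \<in> triples G}"
| "nre_sem (NTest c) G = (if const_node c \<in> nodes G then {(const_node c, const_node c)} else {})"
| "nre_sem (NNest E) G = {(n, n) | n. \<exists>m. (n, m) \<in> nre_sem E G}"
| "nre_sem (NStar E) G = Id_on (nodes G) \<union> (nre_sem E G)\<^sup>+"
| "nre_sem (NSeq E1 E2) G = nre_sem E1 G O nre_sem E2 G"
| "nre_sem (NAlt E1 E2) G = nre_sem E1 G \<union> nre_sem E2 G"

definition certain_answer ::
  "('r, 'i, 'l, 'T, 'f, 'v) setting \<Rightarrow> ('r, 'l) rinstance \<Rightarrow> ('i, 'l) nre
    \<Rightarrow> ('i, 'l) node \<Rightarrow> ('i, 'l) node \<Rightarrow> bool" where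
  "certain_answer \<E> I E n m \<longleftrightarrow>
     (\<forall>J :: ('i, 'l, 'T) tgraph. is_solution \<E> I J \<longrightarrow> (n, m) \<in> nre_sem E J)"

end

theory Submission
  imports Defs
begin

text \<open>A query answer that is a null cannot be certain: renaming the nulls of a solution
  apart yields another solution that does not contain that null. Conversely, a simulation
  fixes constants and transports NRE answers, so every constant answer over a universal
  simulation solution is an answer over every solution.\<close>

lemma nre_sem_subset_nodes: "nre_sem E G \<subseteq> nodes G \<times> nodes G"
proof (induction E)
  case (NStar E)
  have "(nre_sem E G)\<^sup>+ \<subseteq> nodes G \<times> nodes G"
    using NStar.IH by (metis trancl_subset_Sigma)
  then show ?case by auto
qed (auto simp: nodes_def split: if_splits)

lemma eval_sterm_not_null: "\<not> is_null (eval_sterm F \<nu> t)"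
  by (cases t) auto

definition map_tgraph ::
  "(('i, 'l) node \<Rightarrow> ('i, 'l) node) \<Rightarrow> ('i, 'l, 'T) tgraph \<Rightarrow> ('i, 'l, 'T) tgraph" where
  "map_tgraph h G = \<lparr>triples = (\<lambda>(s, p, ob). (h s, p, h ob)) ` triples G,
                     tfacts = apfst h ` tfacts G,
                     lfacts = h ` lfacts G\<rparr>"

lemma nodes_map_tgraph: "nodes (map_tgraph h G) = h ` nodes G"
  unfolding nodes_def map_tgraph_def by (auto simp: image_iff apfst_def map_prod_def) force+

context
  fixes h :: "('i, 'l) node \<Rightarrow> ('i, 'l) node"
  assumes inj_h: "inj h"
begin

lemma triples_map_tgraph_iff:
  "(h s, p, h ob) \<in> triples (map_tgraph h G) \<longleftrightarrow> (s, p, ob) \<in> triples G"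
  unfolding map_tgraph_def by (force simp: inj_eq[OF inj_h])

lemma tfacts_map_tgraph_iff: "(h s, T) \<in> tfacts (map_tgraph h G) \<longleftrightarrow> (s, T) \<in> tfacts G"
  unfolding map_tgraph_def by (force simp: inj_eq[OF inj_h] apfst_def map_prod_def)

lemma lfacts_map_tgraph_iff: "h s \<in> lfacts (map_tgraph h G) \<longleftrightarrow> s \<in> lfacts G"
  unfolding map_tgraph_def by (auto simp: inj_eq[OF inj_h])

lemma has_type_map_tgraph_iff: "has_type (map_tgraph h G) (h s) S \<longleftrightarrow> has_type G s S"
  by (cases S) (simp_all add: tfacts_map_tgraph_iff lfacts_map_tgraph_iff)

lemma triples_map_tgraph_from:
  assumes "(h s, p, y) \<in> triples (map_tgraph h G)"
  obtains ob where "y = h ob" "(s, p, ob) \<in> triples G"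
  using assms unfolding map_tgraph_def by (auto simp: inj_eq[OF inj_h])

lemma sat_schema_map_tgraph:
  assumes "sat_schema \<delta> G"
  shows "sat_schema \<delta> (map_tgraph h G)"
  unfolding sat_schema_def
proof (intro allI impI)
  fix T p S \<mu> n
  assume \<delta>: "\<delta> T p = Some (S, \<mu>)" and "(n, T) \<in> tfacts (map_tgraph h G)"
  then obtain s where n: "n = h s" and "(s, T) \<in> tfacts G"
    unfolding map_tgraph_def by auto
  with assms \<delta> have typed: "\<And>ob. (s, p, ob) \<in> triples G \<Longrightarrow> has_type G ob S"
    and functional: "\<mu> \<in> {MOne, MOpt} \<Longrightarrow>
       \<forall>ob ob'. (s, p, ob) \<in> triples G \<longrightarrow> (s, p, ob') \<in> triples G \<longrightarrow> ob = ob'"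
    and total: "\<mu> \<in> {MOne, MPlus} \<Longrightarrow> \<exists>ob. (s, p, ob) \<in> triples G"
    unfolding sat_schema_def by blast+
  show "(\<forall>m. (n, p, m) \<in> triples (map_tgraph h G) \<longrightarrow> has_type (map_tgraph h G) m S)
    \<and> (\<mu> \<in> {MOne, MOpt} \<longrightarrow> (\<forall>m m'. (n, p, m) \<in> triples (map_tgraph h G)
         \<longrightarrow> (n, p, m') \<in> triples (map_tgraph h G) \<longrightarrow> m = m'))
    \<and> (\<mu> \<in> {MOne, MPlus} \<longrightarrow> (\<exists>m. (n, p, m) \<in> triples (map_tgraph h G)))"
    unfolding n
    using typed functional total
    by (auto simp: has_type_map_tgraph_iff elim!: triples_map_tgraph_from)
      (meson triples_map_tgraph_iff)+
qed

lemma is_solution_map_tgraph: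
  assumes fixes_constants: "\<And>x. \<not> is_null x \<Longrightarrow> h x = x"
    and preserves_literals: "\<And>x. is_literal (h x) \<longleftrightarrow> is_literal x"
    and "is_solution \<E> I G"
  shows "is_solution \<E> I (map_tgraph h G)"
proof -
  have "wf_tgraph (preds \<E>) (map_tgraph h G)"
    using assms(3) preserves_literals
    unfolding is_solution_def wf_tgraph_def map_tgraph_def by auto
  moreover have "sat_schema (delta \<E>) (map_tgraph h G)"
    using assms(3) sat_schema_map_tgraph unfolding is_solution_def by blast
  moreover have "hatom_holds (cons_interp \<E>) \<nu> (map_tgraph h G) a"
    if "hatom_holds (cons_interp \<E>) \<nu> G a" for \<nu> a
  proof -
    have "h (eval_sterm (cons_interp \<E>) \<nu> t) = eval_sterm (cons_interp \<E>) \<nu> t" for t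
      using fixes_constants eval_sterm_not_null by blast
    then show ?thesis
      using that by (cases a)
        (metis hatom_holds.simps(1) triples_map_tgraph_iff,
         metis hatom_holds.simps(2) tfacts_map_tgraph_iff,
         metis hatom_holds.simps(3) lfacts_map_tgraph_iff)
  qed
  then have "sat_tgd (cons_interp \<E>) I (map_tgraph h G) \<sigma>" if "\<sigma> \<in> sttgds \<E>" for \<sigma>
    using assms(3) that unfolding is_solution_def sat_tgd_def by blast
  ultimately show ?thesis unfolding is_solution_def by blast
qed

end

fun shift_nulls :: "nat \<Rightarrow> ('i, 'l) node \<Rightarrow> ('i, 'l) node" where
  "shift_nulls K (NullIri k) = NullIri (k + K)"
| "shift_nulls K (NullLit k) = NullLit (k + K)"
| "shift_nulls K x = x"

lemma inj_shift_nulls: "inj (shift_nulls K)"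
proof (rule injI)
  show "shift_nulls K x = shift_nulls K y \<Longrightarrow> x = y" for x y :: "('i, 'l) node"
    by (cases x; cases y) auto
qed

lemma shift_nulls_avoiding:
  assumes "is_null n"
  obtains K where "n \<notin> range (shift_nulls K)"
proof -
  from assms obtain k where "n = NullIri k \<or> n = NullLit k"
    by (cases n) auto
  then have "n \<noteq> shift_nulls (Suc k) x" for x
    by (cases x) auto
  then show thesis
    using that by blast
qed

lemma solution_avoiding_null:
  assumes "is_solution \<E> I G" and "is_null n"
  obtains J where "is_solution \<E> I J" and "n \<notin> nodes J"
proof -
  obtain k where "n \<notin> range (shift_nulls k)"
    using \<open>is_null n\<close> by (rule shift_nulls_avoiding)
  moreover have "is_solution \<E> I (map_tgraph (shift_nulls k) G)"
  proof (rule is_solution_map_tgraph[OF inj_shift_nulls])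
    show "\<not> is_null x \<Longrightarrow> shift_nulls k x = x" for x :: "('i, 'l) node"
      by (cases x) auto
    show "is_literal (shift_nulls k x) \<longleftrightarrow> is_literal x" for x :: "('i, 'l) node"
      by (cases x) auto
  qed fact
  ultimately show ?thesis
    using that nodes_map_tgraph by blast
qed

lemma node_of_all_solutions_not_null:
  assumes "is_solution \<E> I G" and "\<forall>J. is_solution \<E> I J \<longrightarrow> x \<in> nodes J"
  shows "\<not> is_null x"
proof
  assume "is_null x"
  with assms(1) obtain J where "is_solution \<E> I J" and "x \<notin> nodes J"
    by (rule solution_avoiding_null)
  with assms(2) show False by blast
qed

lemma is_simulationD:
  assumes "is_simulation Rel G H" and "(x, y) \<in> Rel"
  shows "y \<in> nodes H"
    and "\<not> is_null x \<Longrightarrow> y = x"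
    and "(x, p, x') \<in> triples G \<Longrightarrow> \<exists>y'. (y, p, y') \<in> triples H \<and> (x', y') \<in> Rel"
  using assms unfolding is_simulation_def by (blast, force, force)

lemma nre_sem_simulation:
  assumes sim: "is_simulation Rel G H"
  shows "(a, b) \<in> nre_sem E G \<Longrightarrow> (a, a') \<in> Rel \<Longrightarrow> \<exists>b'. (a', b') \<in> nre_sem E H \<and> (b, b') \<in> Rel"
proof (induction E arbitrary: a b a')
  case NEps
  then have "b = a" by auto
  with NEps.prems(2) is_simulationD(1)[OF sim] show ?case by auto
next
  case (NPred p)
  then show ?case
    using is_simulationD(3)[OF sim] by auto
next
  case NAny
  then obtain p where "(a, p, b) \<in> triples G" by auto
  then obtain b' where "(a', p, b') \<in> triples H" "(b, b') \<in> Rel"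
    using is_simulationD(3)[OF sim NAny(2)] by blast
  then show ?case by auto
next
  case (NTest c)
  then have ab: "a = const_node c" "b = const_node c"
    by (auto split: if_splits)
  moreover have "\<not> is_null (const_node c)"
    by (cases c) auto
  ultimately have "a' = a"
    using is_simulationD(2)[OF sim NTest.prems(2)] by simp
  with ab NTest.prems(2) is_simulationD(1)[OF sim] show ?case by auto
next
  case (NNest E)
  then obtain c where "b = a" "(a, c) \<in> nre_sem E G" by auto
  with NNest.IH NNest.prems(2) show ?case by fastforce
next
  case (NStar E)
  have "\<exists>b'. (a', b') \<in> (nre_sem E H)\<^sup>+ \<and> (b, b') \<in> Rel"
    if "(a, b) \<in> (nre_sem E G)\<^sup>+"
    using that
  proof (induction rule: trancl_induct)
    case (base b)
    then show ?case using NStar.IH NStar.prems(2) by blast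
  next
    case (step b c)
    then obtain b' where "(a', b') \<in> (nre_sem E H)\<^sup>+" "(b, b') \<in> Rel" by blast
    moreover obtain c' where "(b', c') \<in> nre_sem E H" "(c, c') \<in> Rel"
      using NStar.IH step(2) calculation(2) by blast
    ultimately show ?case by (meson trancl_into_trancl)
  qed
  moreover have "a' \<in> nodes H"
    using is_simulationD(1)[OF sim NStar.prems(2)] .
  ultimately show ?case
    using NStar.prems by auto
next
  case (NSeq E1 E2)
  then obtain c where c: "(a, c) \<in> nre_sem E1 G" "(c, b) \<in> nre_sem E2 G" by auto
  with NSeq.IH(1) NSeq.prems(2) obtain c' where "(a', c') \<in> nre_sem E1 H" "(c, c') \<in> Rel"
    by blast
  moreover obtain b' where "(c', b') \<in> nre_sem E2 H" "(b, b') \<in> Rel"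
    using NSeq.IH(2) c(2) calculation(2) by blast
  ultimately show ?case by auto
next
  case (NAlt E1 E2)
  then show ?case by simp meson
qed

lemma nre_sem_simulated_by:
  assumes "simulated_by G H" and "(n, m) \<in> nre_sem E G"
    and "\<not> is_null n" and "\<not> is_null m"
  shows "(n, m) \<in> nre_sem E H"
proof -
  obtain Rel where sim: "is_simulation Rel G H" and total: "\<forall>x \<in> nodes G. \<exists>y. (x, y) \<in> Rel"
    using assms(1) unfolding simulated_by_def by blast
  have "n \<in> nodes G"
    using assms(2) nre_sem_subset_nodes by blast
  with total assms(3) is_simulationD(2)[OF sim] have "(n, n) \<in> Rel"
    by metis
  with assms(2,4) nre_sem_simulation[OF sim] is_simulationD(2)[OF sim] show ?thesis
    by metis
qed

theorem proposition4:
  fixes \<E> :: "('r, 'i, 'l, 'T, 'f, 'v) setting"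
    and I :: "('r, 'l) rinstance"
    and E :: "('i, 'l) nre"
    and U :: "('i, 'l, 'T) tgraph"
    and n m :: "('i, 'l) node"
  assumes "wf_setting \<E>"
    and "consistent_setting \<E>"
    and "consistent_instance \<E> I"
    and "universal_sim_solution \<E> I U"
  shows "certain_answer \<E> I E n m \<longleftrightarrow> (n, m) \<in> nre_sem E U \<and> \<not> is_null n \<and> \<not> is_null m"
proof
  have U: "is_solution \<E> I U"
    using assms(4) unfolding universal_sim_solution_def by blast
  assume certain: "certain_answer \<E> I E n m"
  then have "\<forall>J. is_solution \<E> I J \<longrightarrow> n \<in> nodes J"
    and "\<forall>J. is_solution \<E> I J \<longrightarrow> m \<in> nodes J"
    using nre_sem_subset_nodes unfolding certain_answer_def by blast+
  with U have "\<not> is_null n" and "\<not> is_null m"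
    by (metis node_of_all_solutions_not_null)+
  moreover have "(n, m) \<in> nre_sem E U"
    using certain U unfolding certain_answer_def by blast
  ultimately show "(n, m) \<in> nre_sem E U \<and> \<not> is_null n \<and> \<not> is_null m"
    by blast
next
  assume answer: "(n, m) \<in> nre_sem E U \<and> \<not> is_null n \<and> \<not> is_null m"
  show "certain_answer \<E> I E n m"
    unfolding certain_answer_def
  proof (intro allI impI)
    fix J :: "('i, 'l, 'T) tgraph"
    assume "is_solution \<E> I J"
    with assms(4) have "simulated_by U J"
      unfolding universal_sim_solution_def by blast
    with answer show "(n, m) \<in> nre_sem E J"
      using nre_sem_simulated_by by blast
  qed
qed

end
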